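(* The Vitali equivalence relation $E_V$ on $\mathbb{R}$ is closed graphable with diameter $2$.
   Context: $xE_Vy$ iff $x-y\in\mathbb{Q}$. $E$ is closed graphable with diameter $k$ if there is a simple undirected graph $G\subseteq\mathbb{R}\times\mathbb{R}$, closed in $\mathbb{R}^2$, whose connectedness relation equals $E$ and $k$ is the least integer such that any two $G$-connected points are joined by a path of length at most $k$. *)

theory Defs
  imports "HOL-Analysis.Analysis"
begin

definition vitali_rel :: "real \<Rightarrow> real \<Rightarrow> bool" where
  "vitali_rel x y \<longleftrightarrow> x - y \<in> \<rat>"

definition simple_graph :: "(real \<times> real) set \<Rightarrow> bool" where
  "simple_graph G \<longleftrightarrow> (\<forall>x y. (x, y) \<in> G \<longrightarrow> (y, x) \<in> G) \<and> (\<forall>x. (x, x) \<notin> G)"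

definition path_le :: "(real \<times> real) set \<Rightarrow> nat \<Rightarrow> real \<Rightarrow> real \<Rightarrow> bool" where
  "path_le G n x y \<longleftrightarrow> (\<exists>m\<le>n. (x, y) \<in> G ^^ m)"

definition graph_diameter :: "(real \<times> real) set \<Rightarrow> nat \<Rightarrow> bool" where
  "graph_diameter G k \<longleftrightarrow>
     (\<forall>x y. (x, y) \<in> G\<^sup>* \<longrightarrow> path_le G k x y) \<and>
     (\<forall>j. (\<forall>x y. (x, y) \<in> G\<^sup>* \<longrightarrow> path_le G j x y) \<longrightarrow> k \<le> j)"

definition closed_graphable_diam :: "(real \<Rightarrow> real \<Rightarrow> bool) \<Rightarrow> nat \<Rightarrow> bool" where
  "closed_graphable_diam E k \<longleftrightarrow>
     (\<exists>G. simple_graph G \<and> closed G \<and> (\<forall>x y. E x y \<longleftrightarrow> (x, y) \<in> G\<^sup>*) \<and> graph_diameter G k)"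

end

theory Submission
  imports Defs
begin

text \<open>Join x and y by an edge when y - x = p/n with p \<noteq> 0 and n \<le> |(x, y)|. Every rational
  difference is then realised by a path of length two: jump from x by a large integer k (an
  admissible difference as soon as |(x, y)| \<ge> 1), which puts the midpoint far enough from the
  origin to reach y in one more step. A ball of radius r only meets the edge lines with n < r and
  |p| \<le> 2 r^2, so the graph is a locally finite union of closed sets, hence closed.
  Points near the origin, such as 0 and 1/2, are not adjacent, so the diameter is exactly 2.\<close>

lemma closed_Union_finitely_many_meet_balls:
  fixes \<A> :: "'a::metric_space set set"
  assumes closed: "\<And>S. S \<in> \<A> \<Longrightarrow> closed S"
    and finite: "\<And>r. finite {S \<in> \<A>. S \<inter> ball a r \<noteq> {}}"
  shows "closed (\<Union>\<A>)"
proof -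
  have "locally_finite_in euclidean \<A>"
    unfolding locally_finite_in_def
  proof (intro conjI ballI)
    fix x :: 'a
    show "\<exists>V. openin euclidean V \<and> x \<in> V \<and> finite {S \<in> \<A>. S \<inter> V \<noteq> {}}"
      using finite[of "dist a x + 1"] by (intro exI[of _ "ball a (dist a x + 1)"]) auto
  qed simp
  then show ?thesis
    using closedin_locally_finite_Union[of \<A> euclidean] closed by simp
qed

lemma path_le_mono: "path_le G j x y \<Longrightarrow> j \<le> k \<Longrightarrow> path_le G k x y"
  unfolding path_le_def by (meson order_trans)

lemma graph_diameter_SucI:
  assumes "\<And>x y. (x, y) \<in> G\<^sup>* \<Longrightarrow> path_le G (Suc k) x y"
    and "(a, b) \<in> G\<^sup>*" "\<not> path_le G k a b"
  shows "graph_diameter G (Suc k)"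
  unfolding graph_diameter_def
proof (intro conjI allI impI)
  fix j assume "\<forall>x y. (x, y) \<in> G\<^sup>* \<longrightarrow> path_le G j x y"
  then have "path_le G j a b" using assms(2) by blast
  then show "Suc k \<le> j" using assms(3) path_le_mono not_less_eq_eq by blast
qed (use assms(1) in blast)

definition vitali_edges :: "int \<Rightarrow> nat \<Rightarrow> (real \<times> real) set" where
  "vitali_edges p n = {z. snd z - fst z = of_int p / real n \<and> real n \<le> norm z}"

definition vitali_graph :: "(real \<times> real) set" where
  "vitali_graph = \<Union>{vitali_edges p n | p n. p \<noteq> 0 \<and> 1 \<le> n}"

lemma mem_vitali_graph:
  "(x, y) \<in> vitali_graph \<longleftrightarrow>
     (\<exists>p n. p \<noteq> 0 \<and> 1 \<le> n \<and> y - x = of_int p / real n \<and> real n \<le> norm (x, y))"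
proof
  assume "(x, y) \<in> vitali_graph"
  then show "\<exists>p n. p \<noteq> 0 \<and> 1 \<le> n \<and> y - x = of_int p / real n \<and> real n \<le> norm (x, y)"
    unfolding vitali_graph_def vitali_edges_def by auto
next
  assume "\<exists>p n. p \<noteq> 0 \<and> 1 \<le> n \<and> y - x = of_int p / real n \<and> real n \<le> norm (x, y)"
  then obtain p n where "p \<noteq> 0" "1 \<le> n" "(x, y) \<in> vitali_edges p n"
    unfolding vitali_edges_def by auto
  then show "(x, y) \<in> vitali_graph"
    unfolding vitali_graph_def by blast
qed

lemma closed_vitali_edges: "closed (vitali_edges p n)"
  unfolding vitali_edges_def
  by (intro closed_Collect_conj closed_Collect_eq closed_Collect_le continuous_intros)

lemma vitali_edges_index_bound:
  assumes "z \<in> vitali_edges p n" "1 \<le> n"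
  shows "real n \<le> norm z" "\<bar>real_of_int p\<bar> \<le> 2 * norm z ^ 2"
proof -
  obtain x y where z: "z = (x, y)" by fastforce
  show n: "real n \<le> norm z" using assms(1) unfolding vitali_edges_def by simp
  have "of_int p = real n * (y - x)"
    using assms unfolding vitali_edges_def z by simp
  then have "\<bar>of_int p\<bar> = real n * \<bar>y - x\<bar>" by (simp add: abs_mult)
  also have "\<dots> \<le> norm z * (2 * norm z)"
    using n norm_fst_le[of x y] norm_snd_le[of y x] unfolding z
    by (intro mult_mono) auto
  finally show "\<bar>real_of_int p\<bar> \<le> 2 * norm z ^ 2" by (simp add: power2_eq_square mult.commute)
qed

lemma closed_vitali_graph: "closed vitali_graph"
  unfolding vitali_graph_def
proof (rule closed_Union_finitely_many_meet_balls[where a = 0])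
  fix r :: real
  define K where "K = \<lceil>2 * r ^ 2\<rceil>"
  have index: "(p, n) \<in> {-K..K} \<times> {..nat \<lceil>r\<rceil>}"
    if "1 \<le> n" "z \<in> vitali_edges p n" "norm z < r" for p n z
  proof -
    have "real n \<le> norm z" "\<bar>real_of_int p\<bar> \<le> 2 * norm z ^ 2"
      using vitali_edges_index_bound that by auto
    moreover have "norm z ^ 2 \<le> r ^ 2"
      using \<open>norm z < r\<close> by (simp add: power_mono)
    ultimately have "real n \<le> r" "\<bar>real_of_int p\<bar> \<le> 2 * r ^ 2"
      using \<open>norm z < r\<close> by linarith+
    then show ?thesis
      unfolding K_def by (auto simp: abs_le_iff) linarith+
  qed
  have "{S \<in> {vitali_edges p n | p n. p \<noteq> 0 \<and> 1 \<le> n}. S \<inter> ball 0 r \<noteq> {}}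
          \<subseteq> case_prod vitali_edges ` ({-K..K} \<times> {..nat \<lceil>r\<rceil>})"
    using index by (fastforce simp: image_iff)
  then show "finite {S \<in> {vitali_edges p n | p n. p \<noteq> 0 \<and> 1 \<le> n}. S \<inter> ball 0 r \<noteq> {}}"
    by (rule finite_subset) simp
qed (auto simp: closed_vitali_edges)

lemma simple_graph_vitali_graph: "simple_graph vitali_graph"
  unfolding simple_graph_def mem_vitali_graph
proof (intro conjI allI impI)
  fix x y :: real
  assume "\<exists>p n. p \<noteq> 0 \<and> 1 \<le> n \<and> y - x = of_int p / real n \<and> real n \<le> norm (x, y)"
  then obtain p n where "p \<noteq> 0" "1 \<le> n" "y - x = of_int p / real n" "real n \<le> norm (x, y)"
    by blast
  moreover have "norm (y, x) = norm (x, y)" by (simp add: norm_Pair)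
  ultimately show "\<exists>p n. p \<noteq> 0 \<and> 1 \<le> n \<and> x - y = of_int p / real n \<and> real n \<le> norm (y, x)"
    by (intro exI[of _ "-p"] exI[of _ n]) auto
qed auto

lemma vitali_graph_imp_vitali_rel: "(x, y) \<in> vitali_graph \<Longrightarrow> vitali_rel x y"
  unfolding mem_vitali_graph vitali_rel_def
  by (metis Rats_minus_iff Rats_divide Rats_of_int Rats_of_nat minus_diff_eq)

lemma rtrancl_vitali_graph_imp_vitali_rel:
  "(x, y) \<in> vitali_graph\<^sup>* \<Longrightarrow> vitali_rel x y"
proof (induction rule: rtrancl_induct)
  case (step y z)
  have "x - z = (x - y) + (y - z)" by simp
  with step vitali_graph_imp_vitali_rel show ?case
    unfolding vitali_rel_def by (metis Rats_add)
qed (simp add: vitali_rel_def)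

lemma vitali_rel_imp_relpow_2:
  assumes "vitali_rel x y" "x \<noteq> y"
  shows "(x, y) \<in> vitali_graph ^^ 2"
proof -
  have "y - x \<in> \<rat>"
    using assms(1) unfolding vitali_rel_def by (metis Rats_minus_iff minus_diff_eq)
  then obtain p b :: int where "0 < b" "y - x = of_int p / of_int b"
    using Rats_cases' by blast
  then obtain n :: nat where n: "1 \<le> n" "y - x = of_int p / real n"
    by (metis of_int_of_nat_eq pos_int_cases One_nat_def Suc_leI of_nat_0_less_iff)
  define k :: nat where "k = nat \<lceil>\<bar>x\<bar> + \<bar>y\<bar>\<rceil> + n + 1"
  have k: "\<bar>x\<bar> + \<bar>y\<bar> + real n < real k" unfolding k_def by linarith
  define z where "z = x + real k"
  have "real n \<le> \<bar>z\<bar>" unfolding z_def using k by linarith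
  then have far: "real n \<le> norm (x, z)" "real n \<le> norm (z, y)"
    using norm_fst_le[of z y] norm_snd_le[of z x] by auto
  have "(x, z) \<in> vitali_graph"
    unfolding mem_vitali_graph
    using far(1) n(1) k by (intro exI[of _ "int k"] exI[of _ 1]) (auto simp: z_def)
  moreover have "(z, y) \<in> vitali_graph"
    unfolding mem_vitali_graph
  proof (intro exI[of _ "p - int k * int n"] exI[of _ n] conjI)
    show "y - z = of_int (p - int k * int n) / real n"
      using n unfolding z_def by (simp add: field_simps)
    then show "p - int k * int n \<noteq> 0"
      using k unfolding z_def by auto
  qed (use n far in auto)
  ultimately show ?thesis by (auto simp: numeral_2_eq_2 relcomp.simps)
qed

lemma rtrancl_vitali_graph_iff: "(x, y) \<in> vitali_graph\<^sup>* \<longleftrightarrow> vitali_rel x y"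
  using rtrancl_vitali_graph_imp_vitali_rel vitali_rel_imp_relpow_2 relpow_imp_rtrancl
  by blast

lemma path_le_2_vitali_graph:
  assumes "(x, y) \<in> vitali_graph\<^sup>*"
  shows "path_le vitali_graph 2 x y"
proof (cases "x = y")
  case True
  then show ?thesis unfolding path_le_def by (intro exI[of _ 0]) auto
next
  case False
  then show ?thesis
    using assms vitali_rel_imp_relpow_2 rtrancl_vitali_graph_iff unfolding path_le_def by blast
qed

lemma not_path_le_1_vitali_graph: "\<not> path_le vitali_graph 1 0 (1/2)"
proof
  assume "path_le vitali_graph 1 0 (1/2)"
  then obtain m where "m \<le> 1" "(0, 1/2) \<in> vitali_graph ^^ m"
    unfolding path_le_def by blast
  then have "(0, 1/2) \<in> vitali_graph" by (cases m) auto
  then obtain n :: nat where "1 \<le> n" "real n \<le> norm (0::real, 1/2::real)"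
    unfolding mem_vitali_graph by blast
  then show False by (simp add: norm_Pair)
qed

theorem proposition3p9:
  shows "closed_graphable_diam vitali_rel 2"
  unfolding closed_graphable_diam_def
proof (intro exI[of _ vitali_graph] conjI allI)
  show "simple_graph vitali_graph" by (rule simple_graph_vitali_graph)
  show "closed vitali_graph" by (rule closed_vitali_graph)
  show "vitali_rel x y \<longleftrightarrow> (x, y) \<in> vitali_graph\<^sup>*" for x y
    by (simp add: rtrancl_vitali_graph_iff)
  have "(0, 1/2) \<in> vitali_graph\<^sup>*"
    by (simp add: rtrancl_vitali_graph_iff vitali_rel_def)
  with path_le_2_vitali_graph not_path_le_1_vitali_graph
  show "graph_diameter vitali_graph 2"
    using graph_diameter_SucI[of vitali_graph 1 0 "1/2"] by (simp add: numeral_2_eq_2)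
qed

end
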